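(* Consider the controlled system below. (i) For any ${\sf a}\in\mathcal{A}$ there exists $\tilde{\sf a}\in\mathcal{A}^R$ such that $X_t^R({\sf a})=X_t^R(\tilde{\sf a})$ for all $t\in\{0,\dots,T\}$ almost surely. (ii) For any $\tilde{\sf a}\in\mathcal{A}^R$ there exists ${\sf a}\in\mathcal{A}$ such that $X_t^R({\sf a})=X_t^R(\tilde{\sf a})$ for all $t\in\{0,\dots,T\}$ almost surely.
   Context: Setting: $\mathcal{T}=\{0,\dots,T\}$, $\mathcal{T}_0=\{0,\dots,T-1\}$, probability space $(\Omega,\mathcal{F},\mathbb{P})$ with filtration $\{\mathcal{F}_t\}$; $\varepsilon_1,\dots,\varepsilon_T$ independent $\mathbb{R}^q$-valued random variables ($\varepsilon_{t+1}$ being $\mathcal{F}_{t+1}$-measurable); measurable $K:\mathbb{R}^{d+p}\to\mathbb{R}^r$, $H:\mathbb{R}^{r+q}\to\mathbb{R}^d$; for each $t\in\mathcal{T}_0$ a set-valued map $x\mapsto A_t(x)\subseteq\mathbb{R}^p$ and a reward $f_t(x,a)$. For an action process ${\sf a}=\{a_t\}_{t\in\mathcal{T}_0}$ the state process $X({\sf a})$ valued in $\mathcal{X}\subseteq\mathbb{R}^d$ is $X_0$ given, $X_{t+1}=H(K(X_t,a_t),\varepsilon_{t+1})$. $\mathcal{A}$ is the set of ${\sf a}$ with $a_t$ $\mathcal{F}_t$-measurable and $a_t\in A_t(X_t({\sf a}))$ for all $t\in\mathcal{T}_0$. Truncation: $\mathcal{X}_R\subseteq\mathcal{X}$ bounded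 with interior $\mathring{\mathcal{X}}_R$, boundary $\partial\mathcal{X}_R$, compact strictly convex closure; $X_0\in\mathring{\mathcal{X}}_R$; $\mathcal{Q}$ the Euclidean nearest-point projection onto $\mathrm{cl}(\mathcal{X}_R)$; $\tilde H(k,e)=\mathcal{Q}(H(k,e))$ if $H(k,e)\notin\mathring{\mathcal{X}}_R$, else $H(k,e)$. For any adapted ${\sf a}$, $X^R({\sf a})$ is defined by $X^R_0=X_0$ and $X_{t+1}^R=X_t^R\mathbb{I}_{\{X_t^R\in\partial\mathcal{X}_R\}}+\tilde H(K(X_t^R,a_t),\varepsilon_{t+1})\mathbb{I}_{\{X_t^R\in\mathring{\mathcal{X}}_R\}}$ (equivalently $X_t^R=X_t\mathbb{I}_{\{\tau^R>t\}}+\mathcal{Q}(X_{\tau^R\wedge t})\mathbb{I}_{\{\tau^R\le t\}}$ with $\tau^R$ the first time $t$ with $X_t\notin\mathring{\mathcal{X}}_R$). $\mathcal{A}^R$ is the set of ${\sf a}$ with $a_t$ $\mathcal{F}_t$-measurable and $a_t\in A_t(X_t^R({\sf a}))$ for all $t\in\mathcal{T}_0$. Standing assumption: for each $t\in\mathcal{T}_0$ there is a measurable $a_t^*$ with $a_t^*(x)\in\arg\max_{a\in A_t(x)}f_t(x,a)$ for $x\in\partial\mathcal{X}_R$, and a measurable $\hat a_t$ with $\hat a_t(x)\in A_t(x)$ for all $x\in\mathcal{X}$. *)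

theory Defs
  imports "HOL-Probability.Probability"
begin

fun state_proc :: "('r \<Rightarrow> 'q \<Rightarrow> 'd) \<Rightarrow> ('d \<times> 'p \<Rightarrow> 'r) \<Rightarrow> 'd \<Rightarrow> (nat \<Rightarrow> 'w \<Rightarrow> 'q)
    \<Rightarrow> (nat \<Rightarrow> 'w \<Rightarrow> 'p) \<Rightarrow> nat \<Rightarrow> 'w \<Rightarrow> 'd" where
  "state_proc H K x0 eps a 0 \<omega> = x0"
| "state_proc H K x0 eps a (Suc t) \<omega> =
     H (K (state_proc H K x0 eps a t \<omega>, a t \<omega>)) (eps (Suc t) \<omega>)"

definition proj_R :: "'d::euclidean_space set \<Rightarrow> 'd \<Rightarrow> 'd" where
  "proj_R XR y = closest_point (closure XR) y"

definition H_tilde :: "'d::euclidean_space set \<Rightarrow> ('r \<Rightarrow> 'q \<Rightarrow> 'd) \<Rightarrow> 'r \<Rightarrow> 'q \<Rightarrow> 'd" where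
  "H_tilde XR H k e = (if H k e \<notin> interior XR then proj_R XR (H k e) else H k e)"

fun trunc_proc :: "'d::euclidean_space set \<Rightarrow> ('r \<Rightarrow> 'q \<Rightarrow> 'd) \<Rightarrow> ('d \<times> 'p \<Rightarrow> 'r) \<Rightarrow> 'd
    \<Rightarrow> (nat \<Rightarrow> 'w \<Rightarrow> 'q) \<Rightarrow> (nat \<Rightarrow> 'w \<Rightarrow> 'p) \<Rightarrow> nat \<Rightarrow> 'w \<Rightarrow> 'd" where
  "trunc_proc XR H K x0 eps a 0 \<omega> = x0"
| "trunc_proc XR H K x0 eps a (Suc t) \<omega> =
     (let x = trunc_proc XR H K x0 eps a t \<omega> in
      (if x \<in> frontier XR then x else 0)
      + (if x \<in> interior XR then H_tilde XR H (K (x, a t \<omega>)) (eps (Suc t) \<omega>) else 0))"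

definition strictly_convex_set :: "'d::euclidean_space set \<Rightarrow> bool" where
  "strictly_convex_set C \<longleftrightarrow> (\<forall>x\<in>C. \<forall>y\<in>C. \<forall>u::real. x \<noteq> y \<and> 0 < u \<and> u < 1
      \<longrightarrow> u *\<^sub>R x + (1 - u) *\<^sub>R y \<in> interior C)"

definition adm :: "'w measure \<Rightarrow> (nat \<Rightarrow> 'w measure) \<Rightarrow> nat \<Rightarrow> (nat \<Rightarrow> 'd \<Rightarrow> 'p::euclidean_space set)
    \<Rightarrow> ('r \<Rightarrow> 'q \<Rightarrow> 'd) \<Rightarrow> ('d \<times> 'p \<Rightarrow> 'r) \<Rightarrow> 'd \<Rightarrow> (nat \<Rightarrow> 'w \<Rightarrow> 'q)
    \<Rightarrow> (nat \<Rightarrow> 'w \<Rightarrow> 'p) set" where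
  "adm M F T A H K x0 eps = {a. \<forall>t<T. a t \<in> borel_measurable (F t) \<and>
      (\<forall>\<omega>\<in>space M. a t \<omega> \<in> A t (state_proc H K x0 eps a t \<omega>))}"

definition adm_R :: "'w measure \<Rightarrow> (nat \<Rightarrow> 'w measure) \<Rightarrow> nat \<Rightarrow> 'd::euclidean_space set
    \<Rightarrow> (nat \<Rightarrow> 'd \<Rightarrow> 'p::euclidean_space set)
    \<Rightarrow> ('r \<Rightarrow> 'q \<Rightarrow> 'd) \<Rightarrow> ('d \<times> 'p \<Rightarrow> 'r) \<Rightarrow> 'd \<Rightarrow> (nat \<Rightarrow> 'w \<Rightarrow> 'q)
    \<Rightarrow> (nat \<Rightarrow> 'w \<Rightarrow> 'p) set" where
  "adm_R M F T XR A H K x0 eps = {a. \<forall>t<T. a t \<in> borel_measurable (F t) \<and>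
      (\<forall>\<omega>\<in>space M. a t \<omega> \<in> A t (trunc_proc XR H K x0 eps a t \<omega>))}"

end

theory Submission
  imports Defs
begin

text \<open>The truncated process is frozen from the first time it leaves the interior of \<open>XR\<close> on;
up to that exit time it coincides with the untruncated state process, and it does not depend on
the control from the exit time on. So a control can be modified freely after the exit time:
for (i) switch to the boundary selector \<open>astar\<close>, for (ii) switch to the feedback \<open>ahat\<close> of the
untruncated state, which keeps the state in \<open>Xs\<close> and is therefore admissible. The truncated
processes then agree pathwise.\<close>

lemma strictly_convex_set_imp_convex:
  assumes "strictly_convex_set C"
  shows "convex C"
proof (rule convexI)
  fix x y u v assume xy: "x \<in> C" "y \<in> C" and uv: "0 \<le> u" "0 \<le> v" "u + v = (1::real)"
  show "u *\<^sub>R x + v *\<^sub>R y \<in> C"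
  proof (cases "x = y \<or> u = 0 \<or> u = 1")
    case True
    then show ?thesis using xy uv by (auto simp flip: scaleR_add_left)
  next
    case False
    then have "u *\<^sub>R x + (1 - u) *\<^sub>R y \<in> interior C"
      using assms xy uv unfolding strictly_convex_set_def by auto
    then show ?thesis using uv interior_subset by (metis add_diff_cancel_left' subsetD)
  qed
qed

lemma proj_R_in_frontier:
  fixes XR :: "'d::euclidean_space set"
  assumes cvx: "convex (closure XR)" and ne: "interior XR \<noteq> {}" and y: "y \<notin> interior XR"
  shows "proj_R XR y \<in> frontier XR"
proof (cases "y \<in> closure XR")
  case True
  then show ?thesis using y by (simp add: proj_R_def closest_point_self frontier_def)
next
  case False
  have full: "affine hull (closure XR) = UNIV"
    by (rule affine_hull_nonempty_interior) (use ne interior_mono closure_subset in blast)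
  have "closest_point (closure XR) y \<in> rel_frontier (closure XR)"
    using ne False rel_interior_subset[of "closure XR"] full
    by (intro closest_point_in_rel_frontier) (auto simp: interior_subset)
  also have "rel_frontier (closure XR) = frontier (closure XR)"
    by (rule rel_frontier_frontier[OF full])
  also have "\<dots> \<subseteq> frontier XR"
    using interior_mono[OF closure_subset[of XR]] by (auto simp: frontier_def)
  finally show ?thesis by (simp add: proj_R_def)
qed

lemma H_tilde_in_closure:
  fixes XR :: "'d::euclidean_space set"
  assumes "convex (closure XR)" and "interior XR \<noteq> {}"
  shows "H_tilde XR H k e \<in> closure XR"
  using proj_R_in_frontier[OF assms, of "H k e"] interior_subset[of XR] closure_subset[of XR]
  by (auto simp: H_tilde_def frontier_def)

lemma H_tilde_eq_if_in_interior:
  fixes XR :: "'d::euclidean_space set"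
  assumes "convex (closure XR)" and "interior XR \<noteq> {}" and "H_tilde XR H k e \<in> interior XR"
  shows "H_tilde XR H k e = H k e"
  using assms proj_R_in_frontier[OF assms(1,2), of "H k e"] by (auto simp: H_tilde_def frontier_def)

lemma sets_borel_interior [measurable]: "interior S \<in> sets borel"
  by (intro borel_open open_interior)

lemma sets_borel_frontier [measurable]: "frontier S \<in> sets borel"
  by (intro borel_closed frontier_closed)

lemma borel_measurable_case_prod_compose:
  fixes k :: "'w \<Rightarrow> 'k::second_countable_topology" and e :: "'w \<Rightarrow> 'e::second_countable_topology"
  assumes G: "(\<lambda>(k, e). G k e) \<in> borel_measurable borel"
    and k: "k \<in> borel_measurable N" and e: "e \<in> borel_measurable N"
  shows "(\<lambda>\<omega>. G (k \<omega>) (e \<omega>)) \<in> borel_measurable N"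
  using measurable_compose[OF borel_measurable_Pair[OF k e] G] by simp

lemma borel_measurable_H_tilde_compose:
  fixes XR :: "'d::euclidean_space set" and H :: "'r::euclidean_space \<Rightarrow> 'q::euclidean_space \<Rightarrow> 'd"
  assumes cvx: "convex (closure XR)" and ne: "interior XR \<noteq> {}"
    and H: "(\<lambda>(k, e). H k e) \<in> borel_measurable borel"
    and k: "k \<in> borel_measurable N" and e: "e \<in> borel_measurable N"
  shows "(\<lambda>\<omega>. H_tilde XR H (k \<omega>) (e \<omega>)) \<in> borel_measurable N"
proof -
  have "closure XR \<noteq> {}" using ne interior_subset closure_subset by blast
  then have [measurable]: "proj_R XR \<in> borel_measurable borel"
    unfolding proj_R_def
    by (intro borel_measurable_continuous_onI continuous_on_closest_point[OF cvx]) auto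
  have [measurable]: "(\<lambda>\<omega>. H (k \<omega>) (e \<omega>)) \<in> borel_measurable N"
    by (rule borel_measurable_case_prod_compose[OF H k e])
  show ?thesis unfolding H_tilde_def by measurable
qed

lemma trunc_proc_in_closure:
  fixes XR :: "'d::euclidean_space set"
  assumes cvx: "convex (closure XR)" and x0: "x0 \<in> interior XR"
  shows "trunc_proc XR H K x0 eps a t \<omega> \<in> closure XR"
proof (induction t)
  case 0
  then show ?case using x0 interior_subset closure_subset by auto
next
  case (Suc t)
  have "interior XR \<noteq> {}" using x0 by auto
  then have "H_tilde XR H k e \<in> closure XR" for k e by (rule H_tilde_in_closure[OF cvx])
  then show ?case using Suc interior_subset[of XR] by (auto simp: Let_def frontier_def)
qed

lemma trunc_proc_cong:
  assumes "\<And>s. s < t \<Longrightarrow> trunc_proc XR H K x0 eps b s \<omega> \<in> interior XR \<Longrightarrow> a s \<omega> = b s \<omega>"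
  shows "trunc_proc XR H K x0 eps a t \<omega> = trunc_proc XR H K x0 eps b t \<omega>"
  using assms
proof (induction t)
  case 0
  then show ?case by simp
next
  case (Suc t)
  then have "trunc_proc XR H K x0 eps a t \<omega> = trunc_proc XR H K x0 eps b t \<omega>" by auto
  then show ?case using Suc.prems[of t] by (simp add: Let_def)
qed

lemma trunc_proc_eq_state_proc:
  fixes XR :: "'d::euclidean_space set"
  assumes cvx: "convex (closure XR)" and x0: "x0 \<in> interior XR"
    and "trunc_proc XR H K x0 eps a t \<omega> \<in> interior XR"
  shows "trunc_proc XR H K x0 eps a t \<omega> = state_proc H K x0 eps a t \<omega>"
  using assms(3)
proof (induction t)
  case 0
  then show ?case by simp
next
  case (Suc t)
  define x where "x = trunc_proc XR H K x0 eps a t \<omega>"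
  show ?case
  proof (cases "x \<in> interior XR")
    case True
    then have "trunc_proc XR H K x0 eps a (Suc t) \<omega> = H_tilde XR H (K (x, a t \<omega>)) (eps (Suc t) \<omega>)"
      by (simp add: Let_def frontier_def flip: x_def)
    moreover have "interior XR \<noteq> {}" using x0 by auto
    ultimately show ?thesis
      using Suc H_tilde_eq_if_in_interior[OF cvx] True by (simp add: x_def)
  next
    case False
    then have "x \<in> frontier XR"
      using trunc_proc_in_closure[OF cvx x0] by (simp add: frontier_def x_def)
    then have "trunc_proc XR H K x0 eps a (Suc t) \<omega> = x"
      using False by (simp add: Let_def flip: x_def)
    then show ?thesis using Suc.prems False by simp
  qed
qed

lemma state_proc_in_state_space:
  assumes x0: "x0 \<in> Xs"
    and state_space: "\<And>t x b e. t < T \<Longrightarrow> x \<in> Xs \<Longrightarrow> b \<in> A t x \<Longrightarrow> H (K (x, b)) e \<in> Xs"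
    and a: "\<And>t. t < T \<Longrightarrow> state_proc H K x0 eps a t \<omega> \<in> Xs \<Longrightarrow>
              a t \<omega> \<in> A t (state_proc H K x0 eps a t \<omega>)"
    and "t \<le> T"
  shows "state_proc H K x0 eps a t \<omega> \<in> Xs"
  using \<open>t \<le> T\<close>
proof (induction t)
  case 0
  then show ?case using x0 by simp
next
  case (Suc t)
  then have "t < T" "state_proc H K x0 eps a t \<omega> \<in> Xs" by auto
  then show ?case using state_space a by simp
qed

fun closed_loop_state :: "('r \<Rightarrow> 'q \<Rightarrow> 'd) \<Rightarrow> ('d \<times> 'p \<Rightarrow> 'r) \<Rightarrow> 'd \<Rightarrow> (nat \<Rightarrow> 'w \<Rightarrow> 'q)
    \<Rightarrow> (nat \<Rightarrow> 'w \<Rightarrow> 'd \<Rightarrow> 'p) \<Rightarrow> nat \<Rightarrow> 'w \<Rightarrow> 'd" where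
  "closed_loop_state H K x0 eps g 0 \<omega> = x0"
| "closed_loop_state H K x0 eps g (Suc t) \<omega> =
     (let x = closed_loop_state H K x0 eps g t \<omega> in H (K (x, g t \<omega> x)) (eps (Suc t) \<omega>))"

lemma state_proc_closed_loop:
  "state_proc H K x0 eps (\<lambda>t \<omega>. g t \<omega> (closed_loop_state H K x0 eps g t \<omega>)) t \<omega>
     = closed_loop_state H K x0 eps g t \<omega>"
  by (induction t) (auto simp: Let_def)

lemma recursive_process_adapted:
  fixes F :: "nat \<Rightarrow> 'w measure" and X :: "nat \<Rightarrow> 'w \<Rightarrow> 'd::topological_space"
  assumes F: "filtration \<Omega> F"
    and \<phi>: "\<And>t Y b e. Y \<in> borel_measurable (F t) \<Longrightarrow> b \<in> borel_measurable (F t) \<Longrightarrow>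
               e \<in> borel_measurable (F t) \<Longrightarrow> (\<lambda>\<omega>. \<phi> (Y \<omega>) (b \<omega>) (e \<omega>)) \<in> borel_measurable (F t)"
    and X_0: "X 0 = (\<lambda>_. x0)"
    and X_Suc: "\<And>s. X (Suc s) = (\<lambda>\<omega>. \<phi> (X s \<omega>) (a s \<omega>) (eps (Suc s) \<omega>))"
    and a: "\<And>s. s < t \<Longrightarrow> a s \<in> borel_measurable (F s)"
    and eps: "\<And>s. s \<in> {1..t} \<Longrightarrow> eps s \<in> borel_measurable (F s)"
  shows "X t \<in> borel_measurable (F t)"
  using a eps
proof (induction t)
  case 0
  then show ?case by (simp add: X_0)
next
  case (Suc t)
  have lift: "f \<in> borel_measurable (F (Suc t))" if "f \<in> borel_measurable (F t)" for f
    using that filtration.sets_F_mono[OF F, of t "Suc t"] filtration.space_F[OF F]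
    unfolding measurable_def by auto
  show ?case
    unfolding X_Suc using Suc by (intro \<phi>) (auto intro: lift)
qed

locale truncation_setting =
  fixes M :: "'w measure" and F :: "nat \<Rightarrow> 'w measure" and T :: nat
    and eps :: "nat \<Rightarrow> 'w \<Rightarrow> 'q::euclidean_space"
    and K :: "'d::euclidean_space \<times> 'p::euclidean_space \<Rightarrow> 'r::euclidean_space"
    and H :: "'r \<Rightarrow> 'q \<Rightarrow> 'd" and XR :: "'d set" and x0 :: 'd
  assumes filtration: "filtration (space M) F"
    and eps_meas: "\<And>t. t \<in> {1..T} \<Longrightarrow> eps t \<in> borel_measurable (F t)"
    and K_meas: "K \<in> borel_measurable borel"
    and H_meas: "(\<lambda>(k, e). H k e) \<in> borel_measurable borel"
    and convex_closure: "convex (closure XR)"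
    and x0_interior: "x0 \<in> interior XR"
begin

abbreviation X where "X a \<equiv> state_proc H K x0 eps a"
abbreviation X_R where "X_R a \<equiv> trunc_proc XR H K x0 eps a"

lemma interior_nonempty: "interior XR \<noteq> {}"
  using x0_interior by auto

lemma borel_measurable_K_compose:
  fixes Y :: "'a \<Rightarrow> 'd" and b :: "'a \<Rightarrow> 'p"
  assumes "Y \<in> borel_measurable N" and "b \<in> borel_measurable N"
  shows "(\<lambda>\<omega>. K (Y \<omega>, b \<omega>)) \<in> borel_measurable N"
  using measurable_compose[OF borel_measurable_Pair[OF assms] K_meas] .

lemma state_proc_measurable:
  assumes "t \<le> T" and "\<And>s. s < t \<Longrightarrow> a s \<in> borel_measurable (F s)"
  shows "X a t \<in> borel_measurable (F t)"
proof (rule recursive_process_adapted[OF filtration, where a = a and eps = eps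
      and \<phi> = "\<lambda>x b e. H (K (x, b)) e"])
  fix s :: nat and Y :: "'w \<Rightarrow> 'd" and b :: "'w \<Rightarrow> 'p" and e :: "'w \<Rightarrow> 'q"
  assume "Y \<in> borel_measurable (F s)" "b \<in> borel_measurable (F s)" "e \<in> borel_measurable (F s)"
  then show "(\<lambda>\<omega>. H (K (Y \<omega>, b \<omega>)) (e \<omega>)) \<in> borel_measurable (F s)"
    by (intro borel_measurable_case_prod_compose[OF H_meas] borel_measurable_K_compose)
qed (use assms eps_meas in auto)

lemma trunc_proc_measurable:
  assumes "t \<le> T" and "\<And>s. s < t \<Longrightarrow> a s \<in> borel_measurable (F s)"
  shows "X_R a t \<in> borel_measurable (F t)"
proof (rule recursive_process_adapted[OF filtration, where a = a and eps = eps
      and \<phi> = "\<lambda>x b e.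
    (if x \<in> frontier XR then x else 0) + (if x \<in> interior XR then H_tilde XR H (K (x, b)) e else 0)"])
  fix s :: nat and Y :: "'w \<Rightarrow> 'd" and b :: "'w \<Rightarrow> 'p" and e :: "'w \<Rightarrow> 'q"
  assume [measurable]: "Y \<in> borel_measurable (F s)" "b \<in> borel_measurable (F s)"
    "e \<in> borel_measurable (F s)"
  have [measurable]: "(\<lambda>\<omega>. H_tilde XR H (K (Y \<omega>, b \<omega>)) (e \<omega>)) \<in> borel_measurable (F s)"
    by (intro borel_measurable_H_tilde_compose[OF convex_closure interior_nonempty H_meas]
        borel_measurable_K_compose) measurable
  show "(\<lambda>\<omega>. (if Y \<omega> \<in> frontier XR then Y \<omega> else 0)
      + (if Y \<omega> \<in> interior XR then H_tilde XR H (K (Y \<omega>, b \<omega>)) (e \<omega>) else 0))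
      \<in> borel_measurable (F s)"
    by measurable
qed (use assms eps_meas in \<open>auto simp: fun_eq_iff Let_def\<close>)

lemma truncated_control_exists:
  assumes astar_meas: "\<And>t. t < T \<Longrightarrow> astar t \<in> borel_measurable borel"
    and astar_sel: "\<And>t x. t < T \<Longrightarrow> x \<in> frontier XR \<Longrightarrow> astar t x \<in> A t x"
    and a: "a \<in> adm M F T A H K x0 eps"
  shows "\<exists>a' \<in> adm_R M F T XR A H K x0 eps. X_R a' = X_R a"
proof -
  define a' where "a' t \<omega> = (if X_R a t \<omega> \<in> interior XR then a t \<omega> else astar t (X_R a t \<omega>))"
    for t \<omega>
  have same: "X_R a' = X_R a"
    by (intro ext trunc_proc_cong) (simp add: a'_def)
  have a_meas: "a t \<in> borel_measurable (F t)" if "t < T" for t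
    using a that by (simp add: adm_def)
  have "a' \<in> adm_R M F T XR A H K x0 eps"
    unfolding adm_R_def
  proof (intro CollectI allI impI conjI ballI)
    fix t assume t: "t < T"
    have [measurable]: "a t \<in> borel_measurable (F t)" "astar t \<in> borel_measurable borel"
      using t a_meas astar_meas by simp_all
    have [measurable]: "X_R a t \<in> borel_measurable (F t)"
      using t a_meas by (intro trunc_proc_measurable) simp_all
    show "a' t \<in> borel_measurable (F t)"
      unfolding a'_def[abs_def] by measurable
    fix \<omega> assume \<omega>: "\<omega> \<in> space M"
    show "a' t \<omega> \<in> A t (X_R a' t \<omega>)"
    proof (cases "X_R a t \<omega> \<in> interior XR")
      case True
      then have "X_R a t \<omega> = X a t \<omega>"
        by (rule trunc_proc_eq_state_proc[OF convex_closure x0_interior])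
      then show ?thesis using True a t \<omega> same by (simp add: a'_def adm_def)
    next
      case False
      then have "X_R a t \<omega> \<in> frontier XR"
        using trunc_proc_in_closure[OF convex_closure x0_interior] by (simp add: frontier_def)
      then show ?thesis using False astar_sel[OF t] same by (simp add: a'_def)
    qed
  qed
  with same show ?thesis by blast
qed

lemma admissible_control_exists:
  assumes state_space: "\<And>t x b e. t < T \<Longrightarrow> x \<in> Xs \<Longrightarrow> b \<in> A t x \<Longrightarrow> H (K (x, b)) e \<in> Xs"
    and XR_sub: "XR \<subseteq> Xs"
    and ahat_meas: "\<And>t. t < T \<Longrightarrow> ahat t \<in> borel_measurable borel"
    and ahat_sel: "\<And>t x. t < T \<Longrightarrow> x \<in> Xs \<Longrightarrow> ahat t x \<in> A t x"
    and a': "a' \<in> adm_R M F T XR A H K x0 eps"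
  shows "\<exists>a \<in> adm M F T A H K x0 eps. X_R a = X_R a'"
proof -
  \<comment> \<open>After the exit time \<open>a\<close> feeds \<open>ahat\<close> with its own state, so it is built as a
    closed loop.\<close>
  define g where "g t \<omega> x = (if X_R a' t \<omega> \<in> interior XR then a' t \<omega> else ahat t x)" for t \<omega> x
  define a where "a = (\<lambda>t \<omega>. g t \<omega> (closed_loop_state H K x0 eps g t \<omega>))"
  have a_eq: "a t = (\<lambda>\<omega>. if X_R a' t \<omega> \<in> interior XR then a' t \<omega> else ahat t (X a t \<omega>))" for t
    unfolding a_def state_proc_closed_loop by (simp add: g_def)
  have same: "X_R a = X_R a'"
    by (intro ext trunc_proc_cong) (simp add: a_eq)
  have a'_meas: "a' t \<in> borel_measurable (F t)" if "t < T" for t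
    using a' that by (simp add: adm_R_def)
  have a_meas: "\<forall>s<t. a s \<in> borel_measurable (F s)" if "t \<le> T" for t
    using that
  proof (induction t)
    case (Suc t)
    then have IH: "\<And>s. s < t \<Longrightarrow> a s \<in> borel_measurable (F s)" and t: "t < T" by auto
    have [measurable]: "a' t \<in> borel_measurable (F t)"
      using a'_meas t .
    have [measurable]: "X_R a' t \<in> borel_measurable (F t)"
      using t a'_meas by (intro trunc_proc_measurable) simp_all
    have [measurable]: "X a t \<in> borel_measurable (F t)"
      using t IH by (intro state_proc_measurable) simp_all
    have [measurable]: "ahat t \<in> borel_measurable borel"
      using ahat_meas t .
    have "(\<lambda>\<omega>. if X_R a' t \<omega> \<in> interior XR then a' t \<omega> else ahat t (X a t \<omega>))
        \<in> borel_measurable (F t)"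
      by measurable
    then have "a t \<in> borel_measurable (F t)"
      by (simp only: a_eq)
    then show ?case using IH less_Suc_eq by auto
  qed simp
  have a_sel: "a t \<omega> \<in> A t (X a t \<omega>)"
    if t: "t < T" and \<omega>: "\<omega> \<in> space M" and Xs: "X a t \<omega> \<in> Xs" for t \<omega>
  proof (cases "X_R a' t \<omega> \<in> interior XR")
    case True
    then have "X_R a t \<omega> \<in> interior XR" using same by simp
    then have "X a t \<omega> = X_R a' t \<omega>"
      using trunc_proc_eq_state_proc[OF convex_closure x0_interior] same by metis
    then show ?thesis using True a' t \<omega> by (simp add: adm_R_def a_eq)
  next
    case False
    then show ?thesis using ahat_sel[OF t Xs] by (simp add: a_eq)
  qed
  have "X a t \<omega> \<in> Xs" if "t \<le> T" "\<omega> \<in> space M" for t \<omega>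
    using x0_interior interior_subset XR_sub state_space a_sel that
    by (intro state_proc_in_state_space[where T = T and A = A]) auto
  with a_meas a_sel have "a \<in> adm M F T A H K x0 eps"
    unfolding adm_def by (auto dest: Suc_leI)
  with same show ?thesis by blast
qed

end

theorem lemma2:
  fixes M :: "'w measure" and F :: "nat \<Rightarrow> 'w measure" and T :: nat
    and eps :: "nat \<Rightarrow> 'w \<Rightarrow> 'q::euclidean_space"
    and K :: "'d::euclidean_space \<times> 'p::euclidean_space \<Rightarrow> 'r::euclidean_space"
    and H :: "'r \<Rightarrow> 'q \<Rightarrow> 'd"
    and A :: "nat \<Rightarrow> 'd \<Rightarrow> 'p set"
    and f :: "nat \<Rightarrow> 'd \<Rightarrow> 'p \<Rightarrow> real"
    and Xs XR :: "'d set" and x0 :: 'd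
    and astar ahat :: "nat \<Rightarrow> 'd \<Rightarrow> 'p"
  assumes prob: "prob_space M"
    and filt_sub: "\<And>t. subalgebra M (F t)"
    and filt_mono: "\<And>s t. s \<le> t \<Longrightarrow> sets (F s) \<subseteq> sets (F t)"
    and eps_meas: "\<And>t. t \<in> {1..T} \<Longrightarrow> eps t \<in> borel_measurable (F t)"
    and eps_indep: "prob_space.indep_vars M (\<lambda>_. borel) eps {1..T}"
    and K_meas: "K \<in> borel_measurable borel"
    and H_meas: "(\<lambda>(k, e). H k e) \<in> borel_measurable borel"
    and state_space: "\<And>t x b e. t < T \<Longrightarrow> x \<in> Xs \<Longrightarrow> b \<in> A t x \<Longrightarrow> H (K (x, b)) e \<in> Xs"
    and XR_sub: "XR \<subseteq> Xs"
    and XR_bounded: "bounded XR"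
    and XR_strict: "strictly_convex_set (closure XR)"
    and x0_int: "x0 \<in> interior XR"
    and astar_meas: "\<And>t. t < T \<Longrightarrow> astar t \<in> borel_measurable borel"
    and astar_argmax: "\<And>t x. t < T \<Longrightarrow> x \<in> frontier XR \<Longrightarrow>
          astar t x \<in> A t x \<and> (\<forall>b\<in>A t x. f t x b \<le> f t x (astar t x))"
    and ahat_meas: "\<And>t. t < T \<Longrightarrow> ahat t \<in> borel_measurable borel"
    and ahat_sel: "\<And>t x. t < T \<Longrightarrow> x \<in> Xs \<Longrightarrow> ahat t x \<in> A t x"
  shows "(\<forall>a \<in> adm M F T A H K x0 eps. \<exists>a' \<in> adm_R M F T XR A H K x0 eps.
            AE \<omega> in M. \<forall>t\<le>T. trunc_proc XR H K x0 eps a t \<omega> = trunc_proc XR H K x0 eps a' t \<omega>)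
       \<and> (\<forall>a' \<in> adm_R M F T XR A H K x0 eps. \<exists>a \<in> adm M F T A H K x0 eps.
            AE \<omega> in M. \<forall>t\<le>T. trunc_proc XR H K x0 eps a t \<omega> = trunc_proc XR H K x0 eps a' t \<omega>)"
proof -
  have "filtration (space M) F"
    using filt_sub filt_mono by (simp add: filtration_def subalgebra_def)
  then interpret truncation_setting M F T eps K H XR x0
    by (rule truncation_setting.intro[OF _ eps_meas K_meas H_meas
          strictly_convex_set_imp_convex[OF XR_strict] x0_int])
  have astar_sel: "\<And>t x. t < T \<Longrightarrow> x \<in> frontier XR \<Longrightarrow> astar t x \<in> A t x"
    using astar_argmax by blast
  show ?thesis
  proof (intro conjI ballI)
    fix a assume "a \<in> adm M F T A H K x0 eps"
    from truncated_control_exists[OF astar_meas astar_sel this]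
    obtain a' where "a' \<in> adm_R M F T XR A H K x0 eps" and "X_R a' = X_R a" ..
    then show "\<exists>a' \<in> adm_R M F T XR A H K x0 eps. AE \<omega> in M. \<forall>t\<le>T. X_R a t \<omega> = X_R a' t \<omega>"
      by (auto intro!: bexI[of _ a'])
  next
    fix a' assume "a' \<in> adm_R M F T XR A H K x0 eps"
    from admissible_control_exists[OF state_space XR_sub ahat_meas ahat_sel this]
    obtain a where "a \<in> adm M F T A H K x0 eps" and "X_R a = X_R a'" ..
    then show "\<exists>a \<in> adm M F T A H K x0 eps. AE \<omega> in M. \<forall>t\<le>T. X_R a t \<omega> = X_R a' t \<omega>"
      by (auto intro!: bexI[of _ a])
  qed
qed

end
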